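(* Let $K$ be a field of characteristic $\neq2$ and $\tau=(-1,-1,-1,-1)$. Then $\mathrm{Aut}\,A_\tau=G_{\mathrm{odd}}$, the group of all odd automorphisms of $K\langle x_1,x_2\rangle$.
   Context: $A=K\langle x_1,x_2\rangle$ is the free associative algebra with unit on $x_1,x_2$; $\varphi=(f_1,f_2)$ denotes the algebra endomorphism with $\varphi(x_1)=f_1$, $\varphi(x_2)=f_2$. Let $A=B_0\oplus B_1$, where $B_0$ (resp. $B_1$) is the linear span of all words of even (resp. odd) length. An automorphism $\varphi=(f_1,f_2)$ of $A$ is odd if $f_1,f_2\in B_1$; these form a group $G_{\mathrm{odd}}$. For $q_{ij}\in K$, the diagonal braiding $\tau=(q_{11},q_{12},q_{21},q_{22})$ on $A$ is the linear map $A\otimes A\to A\otimes A$ given on words $u,v$ by $(u\otimes v)\tau=q_{11}^{s_1t_1}q_{12}^{s_1t_2}q_{21}^{s_2t_1}q_{22}^{s_2t_2}\,(v\otimes u)$, where $s_i$ (resp. $t_i$) is the number of occurrences of $x_i$ in $u$ (resp. $v$). $A_\tau$ is $A$ equipped with $\tau$, and $\mathrm{Aut}\,A_\tau$ is the group of algebra automorphisms $\varphi$ of $A$ satisfying $(\varphi\otimes\varphi)((w)\tau)=((\varphi\otimes\varphi)(w))\tau$ for all $w\in A\otimes A$, viewed as a subgroup of $\mathrm{Aut}\,K\langle x_1,x_2\rangle$. *)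

theory Defs
  imports Main
begin

text \<open>The free associative algebra K<x1,x2>: elements are finitely supported
  coefficient functions on words over the alphabet {x1,x2}.\<close>

datatype var = X1 | X2

type_synonym 'k fa = "var list \<Rightarrow> 'k"

definition fsupp :: "('a \<Rightarrow> 'k::zero) \<Rightarrow> 'a set" where
  "fsupp f = {w. f w \<noteq> 0}"

definition FA :: "'k::field fa set" where
  "FA = {f. finite (fsupp f)}"

definition fa_one :: "'k::field fa" where
  "fa_one = (\<lambda>w. if w = [] then 1 else 0)"

definition fa_mul :: "'k::field fa \<Rightarrow> 'k fa \<Rightarrow> 'k fa" where
  "fa_mul f g = (\<lambda>w. \<Sum>p\<in>{(u, v). u @ v = w}. f (fst p) * g (snd p))"

text \<open>An endomorphism phi = (f1,f2) is given by F with F X1 = f1, F X2 = f2.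
  Image of a word under phi:\<close>
fun word_img :: "(var \<Rightarrow> 'k::field fa) \<Rightarrow> var list \<Rightarrow> 'k fa" where
  "word_img F [] = fa_one"
| "word_img F (x # w) = fa_mul (F x) (word_img F w)"

definition endo :: "(var \<Rightarrow> 'k::field fa) \<Rightarrow> 'k fa \<Rightarrow> 'k fa" where
  "endo F p = (\<lambda>v. \<Sum>w\<in>fsupp p. p w * word_img F w v)"

definition is_aut :: "(var \<Rightarrow> 'k::field fa) \<Rightarrow> bool" where
  "is_aut F \<longleftrightarrow> (\<forall>x. F x \<in> FA) \<and> bij_betw (endo F) FA FA"

definition G_odd :: "(var \<Rightarrow> 'k::field fa) set" where
  "G_odd = {F. is_aut F \<and> (\<forall>x w. F x w \<noteq> 0 \<longrightarrow> odd (length w))}"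

text \<open>A \<otimes> A: finitely supported coefficient functions on pairs of words.\<close>
definition FA2 :: "(var list \<times> var list \<Rightarrow> 'k::field) set" where
  "FA2 = {t. finite (fsupp t)}"

definition occ :: "var \<Rightarrow> var list \<Rightarrow> nat" where
  "occ x u = length (filter (\<lambda>y. y = x) u)"

text \<open>Scalar of the diagonal braiding: (u \<otimes> v)tau = braid_coeff q u v (v \<otimes> u).\<close>
definition braid_coeff :: "(var \<Rightarrow> var \<Rightarrow> 'k::field) \<Rightarrow> var list \<Rightarrow> var list \<Rightarrow> 'k" where
  "braid_coeff q u v =
     q X1 X1 ^ (occ X1 u * occ X1 v) * q X1 X2 ^ (occ X1 u * occ X2 v) *
     q X2 X1 ^ (occ X2 u * occ X1 v) * q X2 X2 ^ (occ X2 u * occ X2 v)"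

text \<open>Linear extension of tau: coefficient of (a \<otimes> b) in (t)tau.\<close>
definition braid :: "(var \<Rightarrow> var \<Rightarrow> 'k::field) \<Rightarrow> (var list \<times> var list \<Rightarrow> 'k)
    \<Rightarrow> (var list \<times> var list \<Rightarrow> 'k)" where
  "braid q t = (\<lambda>(a, b). braid_coeff q b a * t (b, a))"

definition tens :: "(var \<Rightarrow> 'k::field fa) \<Rightarrow> (var list \<times> var list \<Rightarrow> 'k)
    \<Rightarrow> (var list \<times> var list \<Rightarrow> 'k)" where
  "tens F t = (\<lambda>(a, b). \<Sum>p\<in>fsupp t. t p * word_img F (fst p) a * word_img F (snd p) b)"

definition Aut_tau :: "(var \<Rightarrow> var \<Rightarrow> 'k::field) \<Rightarrow> (var \<Rightarrow> 'k fa) set" where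
  "Aut_tau q = {F. is_aut F \<and> (\<forall>t\<in>FA2. tens F (braid q t) = braid q (tens F t))}"

end

theory Submission
  imports Defs
begin

text \<open>For \<open>q = -1\<close> the braiding scalar of \<open>u \<otimes> v\<close> is \<open>(-1)^(|u| |v|)\<close>, so it depends only
  on the parities of the word lengths. An odd endomorphism maps a word of length \<open>n\<close> to a
  combination of words of length \<open>\<equiv> n (mod 2)\<close>, hence \<open>\<phi> \<otimes> \<phi>\<close> commutes with \<open>\<tau>\<close>.
  Conversely, applying the compatibility condition to \<open>x\<^sub>i \<otimes> x\<^sub>i\<close> and reading off the coefficient
  of \<open>w \<otimes> w\<close> for a word \<open>w\<close> in the support of \<open>f\<^sub>i\<close> gives \<open>-f\<^sub>i(w)\<^sup>2 = (-1)^(|w|\<^sup>2) f\<^sub>i(w)\<^sup>2\<close>;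
  as \<open>1 \<noteq> -1\<close> in characteristic \<open>\<noteq> 2\<close>, \<open>|w|\<close> is odd.\<close>

lemma occ_X1_add_occ_X2: "occ X1 u + occ X2 u = length u"
proof (induction u)
  case (Cons a u)
  then show ?case by (cases a) (auto simp: occ_def)
qed (simp add: occ_def)

lemma braid_coeff_minus_one:
  "braid_coeff (\<lambda>_ _. - (1::'k::field)) u v = (-1) ^ (length u * length v)"
proof -
  have "length u * length v = (occ X1 u + occ X2 u) * (occ X1 v + occ X2 v)"
    by (simp add: occ_X1_add_occ_X2)
  also have "\<dots> = occ X1 u * occ X1 v + occ X1 u * occ X2 v
                  + occ X2 u * occ X1 v + occ X2 u * occ X2 v"
    by (simp add: algebra_simps)
  finally show ?thesis
    by (simp add: braid_coeff_def power_add)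
qed

lemma finite_append_splits: "finite {(u, v). u @ v = (w::'a list)}"
proof -
  have "{(u, v). u @ v = w} \<subseteq> (\<lambda>i. (take i w, drop i w)) ` {..length w}"
  proof
    fix p assume "p \<in> {(u, v). u @ v = w}"
    then obtain u v where "p = (u, v)" "u @ v = w" by auto
    then show "p \<in> (\<lambda>i. (take i w, drop i w)) ` {..length w}"
      by (intro image_eqI[of _ _ "length u"]) auto
  qed
  then show ?thesis by (rule finite_subset) auto
qed

lemma fa_mul_one_right [simp]: "fa_mul f fa_one = (f :: 'k::field fa)"
proof
  fix w
  let ?A = "{(u, v). u @ v = (w::var list)}"
  let ?g = "\<lambda>p. f (fst p) * fa_one (snd p)"
  have "(w, []) \<in> ?A" by simp
  then have "sum ?g ?A = ?g (w, []) + sum ?g (?A - {(w, [])})"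
    using finite_append_splits by (rule sum.remove[rotated])
  also have "sum ?g (?A - {(w, [])}) = 0"
    by (rule sum.neutral) (auto simp: fa_one_def)
  finally show "fa_mul f fa_one w = f w" by (simp add: fa_mul_def fa_one_def)
qed

lemma word_img_length_parity:
  assumes odd_gens: "\<forall>x w. F x w \<noteq> 0 \<longrightarrow> odd (length w)"
    and "word_img F c a \<noteq> (0::'k::field)"
  shows "even (length a) \<longleftrightarrow> even (length c)"
  using assms(2)
proof (induction c arbitrary: a)
  case Nil
  then show ?case by (auto simp: fa_one_def split: if_splits)
next
  case (Cons x c)
  then have "(\<Sum>p\<in>{(u, v). u @ v = a}. F x (fst p) * word_img F c (snd p)) \<noteq> 0"
    by (simp add: fa_mul_def)
  then obtain p where "p \<in> {(u, v). u @ v = a}" "F x (fst p) * word_img F c (snd p) \<noteq> 0"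
    by (meson sum.neutral)
  then obtain u v where "u @ v = a" "F x u \<noteq> 0" "word_img F c v \<noteq> 0"
    by (cases p) auto
  with odd_gens Cons.IH[of v] show ?case by auto
qed

lemma tens_eq_sum_superset:
  assumes "finite S" "fsupp t \<subseteq> S"
  shows "tens F t (a, b) = (\<Sum>p\<in>S. t p * word_img F (fst p) a * word_img F (snd p) b)"
  unfolding tens_def
  by (simp, rule sum.mono_neutral_left[OF assms]) (auto simp: fsupp_def)

lemma tens_monomial:
  "tens F (\<lambda>p. if p = (u, v) then c else 0) (a, b) = c * word_img F u a * word_img F v b"
  by (subst tens_eq_sum_superset[where S = "{(u, v)}"]) (auto simp: fsupp_def)

lemma braid_monomial:
  "braid q (\<lambda>p. if p = (u, v) then c else 0) =
     (\<lambda>p. if p = (v, u) then braid_coeff q u v * c else 0)"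
  by (auto simp: braid_def)

lemma minus_one_power_eq_minus_one_iff:
  assumes "(2::'k::field) \<noteq> 0"
  shows "(-1::'k) ^ n = -1 \<longleftrightarrow> odd n"
proof -
  have "(1::'k) \<noteq> -1"
    using assms by (metis eq_neg_iff_add_eq_0 one_add_one)
  then show ?thesis by (cases "even n") auto
qed

lemma generator_support_odd_if_braid_compatible:
  fixes F :: "var \<Rightarrow> 'k::field fa"
  assumes "(2::'k) \<noteq> 0"
    and compat: "\<forall>t\<in>FA2. tens F (braid (\<lambda>_ _. - 1) t) = braid (\<lambda>_ _. - 1) (tens F t)"
    and "F x w \<noteq> 0"
  shows "odd (length w)"
proof -
  define t :: "var list \<times> var list \<Rightarrow> 'k" where "t = (\<lambda>p. if p = ([x], [x]) then 1 else 0)"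
  have "fsupp t \<subseteq> {([x], [x])}" by (auto simp: fsupp_def t_def)
  then have "t \<in> FA2" by (auto simp: FA2_def intro: finite_subset)
  have "tens F (braid (\<lambda>_ _. - 1) t) (w, w) = - (F x w * F x w)"
    by (simp add: t_def braid_monomial braid_coeff_minus_one tens_monomial)
  moreover have "braid (\<lambda>_ _. - 1) (tens F t) (w, w)
                   = (-1) ^ (length w * length w) * (F x w * F x w)"
    by (simp add: t_def braid_def tens_monomial braid_coeff_minus_one)
  ultimately have "- (F x w * F x w) = (-1) ^ (length w * length w) * (F x w * F x w)"
    using compat \<open>t \<in> FA2\<close> by metis
  with \<open>F x w \<noteq> 0\<close> have "(-1::'k) ^ (length w * length w) = -1"
    by (metis mult_cancel_right mult_minus1 no_zero_divisors)
  with minus_one_power_eq_minus_one_iff[OF assms(1)] show ?thesis by simp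
qed

lemma tens_braid_commute_if_odd_generators:
  fixes F :: "var \<Rightarrow> 'k::field fa"
  assumes odd_gens: "\<forall>x w. F x w \<noteq> 0 \<longrightarrow> odd (length w)" and "t \<in> FA2"
  shows "tens F (braid (\<lambda>_ _. - 1) t) = braid (\<lambda>_ _. - 1) (tens F t)"
proof (rule ext, clarify)
  fix a b
  let ?S = "fsupp t"
  let ?sign = "\<lambda>m n. (-1::'k) ^ (m * n)"
  have fin: "finite ?S" using \<open>t \<in> FA2\<close> by (simp add: FA2_def)
  have supp_braid: "fsupp (braid (\<lambda>_ _. - 1) t) \<subseteq> prod.swap ` ?S"
    by (auto simp: fsupp_def braid_def image_iff)
  have sign_cong: "?sign (length (fst q)) (length (snd q)) * t q
                     * word_img F (snd q) a * word_img F (fst q) b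
                 = ?sign (length b) (length a)
                     * (t q * word_img F (fst q) b * word_img F (snd q) a)" for q
  proof (cases "word_img F (snd q) a \<noteq> 0 \<and> word_img F (fst q) b \<noteq> 0")
    case True
    then have "even (length a) = even (length (snd q))" "even (length b) = even (length (fst q))"
      using word_img_length_parity[OF odd_gens] by blast+
    then have "?sign (length (fst q)) (length (snd q)) = ?sign (length b) (length a)"
      by (metis even_mult_iff neg_one_even_power neg_one_odd_power)
    then show ?thesis by (simp add: algebra_simps)
  qed auto
  have "tens F (braid (\<lambda>_ _. - 1) t) (a, b) =
      (\<Sum>p\<in>prod.swap ` ?S. braid (\<lambda>_ _. - 1) t p * word_img F (fst p) a * word_img F (snd p) b)"
    using fin supp_braid by (simp add: tens_eq_sum_superset)
  also have "\<dots> = (\<Sum>q\<in>?S. ?sign (length (fst q)) (length (snd q)) * t q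
                             * word_img F (snd q) a * word_img F (fst q) b)"
    by (subst sum.reindex) (auto simp: braid_def braid_coeff_minus_one case_prod_beta)
  also have "\<dots> = (\<Sum>q\<in>?S. ?sign (length b) (length a)
                             * (t q * word_img F (fst q) b * word_img F (snd q) a))"
    by (rule sum.cong[OF refl sign_cong])
  also have "\<dots> = braid (\<lambda>_ _. - 1) (tens F t) (a, b)"
    by (simp add: braid_def braid_coeff_minus_one tens_eq_sum_superset[OF fin] sum_distrib_left)
  finally show "tens F (braid (\<lambda>_ _. - 1) t) (a, b) = braid (\<lambda>_ _. - 1) (tens F t) (a, b)" .
qed

theorem lemma6:
  assumes "(2::'k::field) \<noteq> 0"
  shows "Aut_tau (\<lambda>_ _. - (1::'k)) = (G_odd :: (var \<Rightarrow> 'k fa) set)"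
proof (intro equalityI subsetI)
  fix F :: "var \<Rightarrow> 'k fa"
  assume "F \<in> Aut_tau (\<lambda>_ _. - 1)"
  then show "F \<in> G_odd"
    using generator_support_odd_if_braid_compatible[OF assms]
    by (auto simp: Aut_tau_def G_odd_def)
next
  fix F :: "var \<Rightarrow> 'k fa"
  assume "F \<in> G_odd"
  then show "F \<in> Aut_tau (\<lambda>_ _. - 1)"
    using tens_braid_commute_if_odd_generators by (auto simp: Aut_tau_def G_odd_def)
qed

end
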